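(* Let $\delta\geq0$. If a $2$-edge-coloured (red/blue) $K_n$ is $\delta$-close to being split, then it has a vertex incident to at most $(1/4+3\delta)n$ red edges or a vertex incident to at most $(1/4+3\delta)n$ blue edges.
   Context: A $2$-edge-coloured $K_n$ is split if its vertex set can be partitioned into a set spanning only red edges and a set spanning only blue edges. It is $\delta$-close to being split if it can be made into a split colouring by changing the colours of at most $\delta n^2$ edges. *)

theory Defs
  imports Complex_Main
begin

text \<open>A red/blue 2-edge-colouring is given by the set R of red edges (a subset of the edges of K_n);
all other edges of K_n are blue.\<close>

definition edges_K :: "nat \<Rightarrow> nat set set" where
  "edges_K n = {e. \<exists>u v. e = {u, v} \<and> u < n \<and> v < n \<and> u \<noteq> v}"

definition is_split :: "nat \<Rightarrow> nat set set \<Rightarrow> bool" where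
  "is_split n R \<longleftrightarrow> (\<exists>A B. A \<union> B = {..<n} \<and> A \<inter> B = {} \<and>
      (\<forall>e\<in>edges_K n. e \<subseteq> A \<longrightarrow> e \<in> R) \<and>
      (\<forall>e\<in>edges_K n. e \<subseteq> B \<longrightarrow> e \<notin> R))"

definition delta_close_split :: "real \<Rightarrow> nat \<Rightarrow> nat set set \<Rightarrow> bool" where
  "delta_close_split \<delta> n R \<longleftrightarrow> (\<exists>R'. R' \<subseteq> edges_K n \<and> is_split n R' \<and>
      real (card ((R - R') \<union> (R' - R))) \<le> \<delta> * real n ^ 2)"

definition red_degree :: "nat \<Rightarrow> nat set set \<Rightarrow> nat \<Rightarrow> nat" where
  "red_degree n R v = card {u. u < n \<and> u \<noteq> v \<and> {u, v} \<in> R}"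

definition blue_degree :: "nat \<Rightarrow> nat set set \<Rightarrow> nat \<Rightarrow> nat" where
  "blue_degree n R v = card {u. u < n \<and> u \<noteq> v \<and> {u, v} \<notin> R}"

end

theory Submission
  imports Defs
begin

(* Let R' be a split colouring with red part A and blue part B, and D the set of edges on which
   R and R' differ. Give every vertex its degree in the colour opposite to its part: blue degree
   on A, red degree on B. In R' every pair {a, b} with a in A and b in B is counted exactly once
   (blue at a or red at b) and no other pair is counted, so these degrees sum to
   card A * card B <= n^2/4. Passing to R changes each of them by at most the degree in D
   (red_degree n D, read for an arbitrary edge set D), and those degrees sum to 2 card D <= 2 delta n^2.
   Averaging over the n vertices yields one of opposite degree at most (1/4 + 2 delta) n. *)

lemma finite_edges_K: "finite (edges_K n)"
proof (rule finite_subset)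
  show "edges_K n \<subseteq> Pow {..<n}" unfolding edges_K_def by auto
qed simp

lemma card_edge_K: "e \<in> edges_K n \<Longrightarrow> card e = 2"
  unfolding edges_K_def by auto

lemma edge_in_edges_K: "u < n \<Longrightarrow> v < n \<Longrightarrow> u \<noteq> v \<Longrightarrow> {u, v} \<in> edges_K n"
  unfolding edges_K_def by auto

lemma edges_K_other_end:
  assumes "e \<in> edges_K n" "a \<in> e"
  obtains b where "e = {a, b}" "a < n" "b < n" "a \<noteq> b"
  using assms unfolding edges_K_def by (auto simp: insert_commute)

lemma sum_red_degree_eq_double_card:
  assumes "D \<subseteq> edges_K n"
  shows "(\<Sum>v<n. red_degree n D v) = 2 * card D"
proof -
  let ?N = "\<lambda>v. {u. u < n \<and> u \<noteq> v \<and> {u, v} \<in> D}"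
  let ?end = "\<lambda>(v, u). ({u, v}, v)"
  have finD: "finite D" using assms finite_edges_K by (rule finite_subset)
  have card2: "card e = 2" if "e \<in> D" for e
    using that assms by (intro card_edge_K) blast
  have "bij_betw ?end (SIGMA v:{..<n}. ?N v) (SIGMA e:D. e)"
    unfolding bij_betw_def
  proof
    show "inj_on ?end (SIGMA v:{..<n}. ?N v)"
      by (auto intro!: inj_onI simp: doubleton_eq_iff)
    show "?end ` (SIGMA v:{..<n}. ?N v) = (SIGMA e:D. e)"
    proof (intro equalityI subsetI)
      fix p assume "p \<in> (SIGMA e:D. e)"
      then obtain e a where p: "p = (e, a)" and "e \<in> D" "a \<in> e" by auto
      with assms obtain b where "e = {a, b}" "a < n" "b < n" "a \<noteq> b"
        by (blast elim: edges_K_other_end)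
      with p \<open>e \<in> D\<close> show "p \<in> ?end ` (SIGMA v:{..<n}. ?N v)"
        by (auto simp: image_iff insert_commute intro!: bexI[of _ "(a, b)"])
    qed auto
  qed
  then have "card (SIGMA v:{..<n}. ?N v) = card (SIGMA e:D. e)"
    by (rule bij_betw_same_card)
  moreover have "card (SIGMA e:D. e) = (\<Sum>e\<in>D. card e)"
    using finD card2 by (intro card_SigmaI) (auto intro: card_ge_0_finite)
  ultimately show ?thesis
    unfolding red_degree_def using finD card2 by (simp add: card_SigmaI)
qed

lemma red_degree_le_recolour:
  "red_degree n R v \<le> red_degree n R' v + red_degree n ((R - R') \<union> (R' - R)) v"
  unfolding red_degree_def by (rule order_trans[OF card_mono card_Un_le]) auto

lemma blue_degree_le_recolour:
  "blue_degree n R v \<le> blue_degree n R' v + red_degree n ((R - R') \<union> (R' - R)) v"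
  unfolding blue_degree_def red_degree_def by (rule order_trans[OF card_mono card_Un_le]) auto

definition split_partition :: "nat \<Rightarrow> nat set set \<Rightarrow> nat set \<Rightarrow> nat set \<Rightarrow> bool" where
  "split_partition n R A B \<longleftrightarrow> A \<union> B = {..<n} \<and> A \<inter> B = {} \<and>
      (\<forall>e\<in>edges_K n. e \<subseteq> A \<longrightarrow> e \<in> R) \<and> (\<forall>e\<in>edges_K n. e \<subseteq> B \<longrightarrow> e \<notin> R)"

lemma is_split_iff_split_partition: "is_split n R \<longleftrightarrow> (\<exists>A B. split_partition n R A B)"
  unfolding is_split_def split_partition_def ..

lemma split_partition_finite:
  "split_partition n R A B \<Longrightarrow> finite A \<and> finite B"
  unfolding split_partition_def by (metis finite_Un finite_lessThan)

lemma split_partition_card: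
  "split_partition n R A B \<Longrightarrow> card A + card B = n"
  unfolding split_partition_def by (metis card_Un_disjoint card_lessThan finite_Un finite_lessThan)

lemma split_partition_blue_neighbour:
  assumes part: "split_partition n R A B" and "v \<in> A" "u < n" "u \<noteq> v" "{u, v} \<notin> R"
  shows "u \<in> B"
proof -
  have AB: "A \<union> B = {..<n}" and red: "\<forall>e\<in>edges_K n. e \<subseteq> A \<longrightarrow> e \<in> R"
    using part unfolding split_partition_def by simp_all
  have "v < n" using \<open>v \<in> A\<close> AB by auto
  with assms(3,4) have "{u, v} \<in> edges_K n" by (intro edge_in_edges_K)
  with red assms(2,5) have "\<not> {u, v} \<subseteq> A" by blast
  with assms(2) have "u \<notin> A" by simp
  with \<open>u < n\<close> AB show ?thesis by auto
qed

lemma split_partition_red_neighbour: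
  assumes part: "split_partition n R A B" and "v \<in> B" "u < n" "u \<noteq> v" "{u, v} \<in> R"
  shows "u \<in> A"
proof -
  have AB: "A \<union> B = {..<n}" and blue: "\<forall>e\<in>edges_K n. e \<subseteq> B \<longrightarrow> e \<notin> R"
    using part unfolding split_partition_def by simp_all
  have "v < n" using \<open>v \<in> B\<close> AB by auto
  with assms(3,4) have "{u, v} \<in> edges_K n" by (intro edge_in_edges_K)
  with blue assms(2,5) have "\<not> {u, v} \<subseteq> B" by blast
  with assms(2) have "u \<notin> B" by simp
  with \<open>u < n\<close> AB show ?thesis by auto
qed

lemma split_partition_degree_sum:
  assumes part: "split_partition n R A B"
  shows "(\<Sum>v\<in>A. blue_degree n R v) + (\<Sum>v\<in>B. red_degree n R v) = card A * card B"
proof -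
  have AB: "A \<union> B = {..<n}" "A \<inter> B = {}"
    using part unfolding split_partition_def by auto
  have finA: "finite A" and finB: "finite B"
    using split_partition_finite[OF part] by auto
  have blue_A: "blue_degree n R v = (\<Sum>u\<in>B. if {u, v} \<in> R then 0 else 1)" if "v \<in> A" for v
  proof -
    have "{u. u < n \<and> u \<noteq> v \<and> {u, v} \<notin> R} = {u\<in>B. {u, v} \<notin> R}"
      using that AB split_partition_blue_neighbour[OF part that] by auto
    then show ?thesis
      unfolding blue_degree_def using finB by (simp add: sum.If_cases Int_def)
  qed
  have red_B: "red_degree n R v = (\<Sum>u\<in>A. if {u, v} \<in> R then 1 else 0)" if "v \<in> B" for v
  proof -
    have "{u. u < n \<and> u \<noteq> v \<and> {u, v} \<in> R} = {u\<in>A. {u, v} \<in> R}"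
      using that AB split_partition_red_neighbour[OF part that] by auto
    then show ?thesis
      unfolding red_degree_def using finA by (simp add: sum.If_cases Int_def)
  qed
  have "(\<Sum>v\<in>B. \<Sum>u\<in>A. if {u, v} \<in> R then 1 else 0) = (\<Sum>v\<in>A. \<Sum>u\<in>B. if {u, v} \<in> R then 1 else 0::nat)"
    by (subst sum.swap) (simp add: insert_commute)
  then have "(\<Sum>v\<in>A. blue_degree n R v) + (\<Sum>v\<in>B. red_degree n R v)
      = (\<Sum>v\<in>A. \<Sum>u\<in>B. (if {u, v} \<in> R then 0 else 1) + (if {u, v} \<in> R then 1 else 0))"
    by (simp add: blue_A red_B sum.distrib)
  also have "\<dots> = (\<Sum>v\<in>A. \<Sum>u\<in>B. 1)"
    by (intro sum.cong refl) simp
  also have "\<dots> = card A * card B"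
    by simp
  finally show ?thesis .
qed

lemma sum_opposite_degree_le:
  assumes "R \<subseteq> edges_K n" "R' \<subseteq> edges_K n" and part: "split_partition n R' A B"
  shows "(\<Sum>v<n. if v \<in> A then blue_degree n R v else red_degree n R v)
    \<le> card A * card B + 2 * card ((R - R') \<union> (R' - R))"
proof -
  let ?D = "(R - R') \<union> (R' - R)"
  have AB: "A \<union> B = {..<n}" "A \<inter> B = {}"
    using part unfolding split_partition_def by auto
  have fin: "finite A" "finite B"
    using split_partition_finite[OF part] by auto
  have "(\<Sum>v<n. if v \<in> A then blue_degree n R v else red_degree n R v)
      = (\<Sum>v\<in>A. if v \<in> A then blue_degree n R v else red_degree n R v)
        + (\<Sum>v\<in>B. if v \<in> A then blue_degree n R v else red_degree n R v)"
    unfolding AB(1)[symmetric] using AB(2) fin by (simp add: sum.union_disjoint)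
  also have "\<dots> = (\<Sum>v\<in>A. blue_degree n R v) + (\<Sum>v\<in>B. red_degree n R v)"
    using AB(2) by (intro arg_cong2[where f = "(+)"] sum.cong) auto
  also have "\<dots> \<le> (\<Sum>v\<in>A. blue_degree n R' v + red_degree n ?D v) + (\<Sum>v\<in>B. red_degree n R' v + red_degree n ?D v)"
    by (intro add_mono sum_mono blue_degree_le_recolour red_degree_le_recolour)
  also have "\<dots> = card A * card B + (\<Sum>v<n. red_degree n ?D v)"
    unfolding AB(1)[symmetric] using AB(2) fin split_partition_degree_sum[OF part]
    by (simp add: sum.distrib sum.union_disjoint)
  also have "(\<Sum>v<n. red_degree n ?D v) = 2 * card ?D"
    using assms(1,2) by (intro sum_red_degree_eq_double_card) auto
  finally show ?thesis .
qed

lemma ex_le_average: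
  fixes f :: "'a \<Rightarrow> real"
  assumes "finite A" "A \<noteq> {}" "sum f A \<le> real (card A) * c"
  shows "\<exists>x\<in>A. f x \<le> c"
proof (rule ccontr)
  assume "\<not> ?thesis"
  then have "(\<Sum>x\<in>A. c) < sum f A"
    using assms(1,2) by (intro sum_strict_mono) auto
  with assms(3) show False by simp
qed

theorem proposition3p5:
  fixes \<delta> :: real and n :: nat and R :: "nat set set"
  assumes "\<delta> \<ge> 0" and "n \<ge> 1"
    and "R \<subseteq> edges_K n"
    and "delta_close_split \<delta> n R"
  shows "\<exists>v<n. real (red_degree n R v) \<le> (1/4 + 3*\<delta>) * real n
            \<or> real (blue_degree n R v) \<le> (1/4 + 3*\<delta>) * real n"
proof -
  obtain R' A B where R': "R' \<subseteq> edges_K n" and part: "split_partition n R' A B"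
    and close: "real (card ((R - R') \<union> (R' - R))) \<le> \<delta> * real n ^ 2"
    using assms(4) unfolding delta_close_split_def is_split_iff_split_partition by blast
  define f where "f v = (if v \<in> A then blue_degree n R v else red_degree n R v)" for v
  have amgm: "4 * real (card A * card B) \<le> real n ^ 2"
  proof -
    have "0 \<le> (real (card A) - real (card B))\<^sup>2" by simp
    then show ?thesis
      using split_partition_card[OF part, symmetric] by (simp add: power2_eq_square algebra_simps)
  qed
  have "(\<Sum>v<n. real (f v)) \<le> real (card A * card B) + 2 * real (card ((R - R') \<union> (R' - R)))"
    using sum_opposite_degree_le[OF assms(3) R' part] unfolding f_def of_nat_sum[symmetric]
    by linarith
  also have "\<dots> \<le> real (card {..<n}) * ((1/4 + 3*\<delta>) * real n)"
    using amgm close assms(1) by (simp add: power2_eq_square algebra_simps)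
  finally have "\<exists>v\<in>{..<n}. real (f v) \<le> (1/4 + 3*\<delta>) * real n"
    using assms(2) by (intro ex_le_average) (auto simp: lessThan_empty_iff)
  then obtain v where "v < n" "real (f v) \<le> (1/4 + 3*\<delta>) * real n"
    by blast
  then show ?thesis
    unfolding f_def by (auto split: if_splits)
qed

end
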